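(* Let $G$ be a graph on $n$ vertices with degrees $d_1,\ldots,d_n$, let $\overline{G}$ be its complement with signless Laplacian eigenvalues $\overline{q}_1\ge\cdots\ge\overline{q}_n$, and let $t\ge 1$ be an integer. Then the signless Laplacian eigenvalues of $\overline{G^{(t)}}$ (the complement of the blow-up $G^{(t)}$), listed with multiplicity (a total of $tn$ values), are $t\overline{q}_1+2(t-1),\ldots,t\overline{q}_n+2(t-1)$ together with $tn-td_1-2,\ldots,tn-td_n-2$, where each $tn-td_i-2$ ($i=1,\ldots,n$) is taken with multiplicity $t-1$.
   Context: All graphs are simple and undirected; $\overline{H}$ denotes the complement of a graph $H$. For a graph $H$, $A(H)$ is its adjacency matrix, $D(H)$ the diagonal matrix of its vertex degrees, and $Q(H)=D(H)+A(H)$ its signless Laplacian matrix; signless Laplacian eigenvalues are the eigenvalues of $Q(H)$. For a graph $G$ and an integer $t\ge 1$, the blow-up $G^{(t)}$ is the graph obtained by replacing each vertex $u$ of $G$ by a set $V_u$ of $t$ pairwise nonadjacent vertices, and each edge $\{u,v\}$ of $G$ by a complete bipartite graph with parts $V_u$ and $V_v$ (so $A(G^{(t)})=A(G)\otimes J_t$, with $J_t$ the $t\times t$ all-ones matrix). *)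

theory Defs
  imports "Jordan_Normal_Form.Char_Poly"
begin

definition simple_graph :: "nat \<Rightarrow> (nat \<Rightarrow> nat \<Rightarrow> bool) \<Rightarrow> bool" where
  "simple_graph n E \<longleftrightarrow> (\<forall>i<n. \<forall>j<n. E i j = E j i) \<and> (\<forall>i<n. \<not> E i i)"

definition adj_mat :: "nat \<Rightarrow> (nat \<Rightarrow> nat \<Rightarrow> bool) \<Rightarrow> real mat" where
  "adj_mat n E = mat n n (\<lambda>(i,j). if E i j then 1 else 0)"

definition degree :: "nat \<Rightarrow> (nat \<Rightarrow> nat \<Rightarrow> bool) \<Rightarrow> nat \<Rightarrow> nat" where
  "degree n E i = card {j. j < n \<and> E i j}"

definition deg_mat :: "nat \<Rightarrow> (nat \<Rightarrow> nat \<Rightarrow> bool) \<Rightarrow> real mat" where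
  "deg_mat n E = mat n n (\<lambda>(i,j). if i = j then real (degree n E i) else 0)"

definition signless_laplacian :: "nat \<Rightarrow> (nat \<Rightarrow> nat \<Rightarrow> bool) \<Rightarrow> real mat" where
  "signless_laplacian n E = deg_mat n E + adj_mat n E"

definition complement :: "(nat \<Rightarrow> nat \<Rightarrow> bool) \<Rightarrow> nat \<Rightarrow> nat \<Rightarrow> bool" where
  "complement E i j \<longleftrightarrow> i \<noteq> j \<and> \<not> E i j"

(* blow-up G^(t) on vertex set {0..<t*n}: vertex i lies in class V_(i div t);
   adjacency matrix A(G) \<otimes> J_t *)
definition blowup :: "nat \<Rightarrow> (nat \<Rightarrow> nat \<Rightarrow> bool) \<Rightarrow> nat \<Rightarrow> nat \<Rightarrow> bool" where
  "blowup t E i j \<longleftrightarrow> E (i div t) (j div t)"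

end

theory Submission
  imports Defs "Jordan_Normal_Form.Schur_Decomposition" "Jordan_Normal_Form.Jordan_Normal_Form_Uniqueness"
begin

(* Write a vertex of the blow-up as i = u t + a with class u = i div t. The signless Laplacian
   of the complement of G^(t) is (A(complement G) + I) \<otimes> J_t + diag(t n - t d_u - 2) \<otimes> I_t.
   In the basis formed by the class indicators 1_(V_u) and the differences e_(u t) - e_(u t + a),
   0 < a < t, it is block diagonal: on the indicators it acts as
   t (A(complement G) + I) + diag(t n - t d_u - 2) = t Q(complement G) + 2 (t - 1) I,
   and e_(u t) - e_(u t + a) is an eigenvector for t n - t d_u - 2. The spectrum of
   t Q(complement G) + 2 (t - 1) I is read off a Schur triangularisation of Q(complement G). *)

lemma (in comm_monoid_set) lessThan_mult_group:
  fixes g :: "nat \<Rightarrow> 'a"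
  shows "F g {..<n * k} = F (\<lambda>m. F (\<lambda>a. g (m * k + a)) {..<k}) {..<n}"
proof -
  have "F g {m * k..<m * k + k} = F (\<lambda>a. g (m * k + a)) {..<k}" for m
    using atLeastLessThan_shift_bounds[of g 0 "m * k" k]
    by (simp add: atLeast0LessThan comp_def add.commute)
  then show ?thesis by (simp add: nat_group[symmetric])
qed

lemma prod_lessThan_mult_mod:
  "(\<Prod>k<m * n. g (k mod n)) = (\<Prod>u<n. g u :: 'a :: comm_monoid_mult) ^ m"
  by (simp add: prod.lessThan_mult_group)

lemma mult_add_eq_mult_add_iff:
  fixes t :: nat
  assumes "a < t" "b < t"
  shows "v * t + a = u * t + b \<longleftrightarrow> v = u \<and> a = b"
  by (metis assms add.commute add_right_cancel div_mult_self1 div_less mod_mult_self1 mod_less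
      add_cancel_left_left less_zeroE)

lemma mult_index_sum:
  "A \<in> carrier_mat m k \<Longrightarrow> B \<in> carrier_mat k l \<Longrightarrow> i < m \<Longrightarrow> j < l \<Longrightarrow>
   (A * B) $$ (i, j) = (\<Sum>h<k. A $$ (i, h) * B $$ (h, j))"
  by (simp add: scalar_prod_def atLeast0LessThan)

lemma block_index_less:
  fixes t :: nat
  assumes "a < t" "v < n"
  shows "v * t + a < t * n"
proof -
  have "v * t + a < Suc v * t" using assms(1) by simp
  also have "\<dots> \<le> n * t" using assms(2) by (intro mult_le_mono1) simp
  finally show ?thesis by (simp add: mult.commute)
qed

lemma prod_lessThan_eq_prod_list: "(\<Prod>i<n. f i) = prod_list (map f [0..<n])"
  using prod.distinct_set_conv_list[of "[0..<n]" f] by (simp add: atLeast0LessThan)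

section \<open>Characteristic polynomials\<close>

lemma char_poly_four_block_lower_left_zero:
  fixes A :: "'a :: idom mat"
  assumes A: "A \<in> carrier_mat n n" and B: "B \<in> carrier_mat n m" and D: "D \<in> carrier_mat m m"
  shows "char_poly (four_block_mat A B (0\<^sub>m m n) D) = char_poly A * char_poly D"
proof -
  have "char_poly_matrix (four_block_mat A B (0\<^sub>m m n) D) =
    four_block_mat (char_poly_matrix A) (map_mat (\<lambda>a. [:- a:]) B) (0\<^sub>m m n) (char_poly_matrix D)"
    by (rule eq_matI) (use A B D in \<open>auto simp: char_poly_matrix_def one_poly_def\<close>)
  then show ?thesis
    unfolding char_poly_def using A B D
    by (simp add: det_four_block_mat_lower_left_zero[of _ n _ m])
qed

lemma char_poly_mat_diag: "char_poly (mat_diag n f) = (\<Prod>i<n. [:- f i, 1:])"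
proof -
  have "upper_triangular (mat_diag n f)" by (simp add: upper_triangular_def mat_diag_def)
  then have "char_poly (mat_diag n f) = (\<Prod>a\<leftarrow>diag_mat (mat_diag n f). [:- a, 1:])"
    by (rule char_poly_upper_triangular[OF mat_diag_dim])
  also have "diag_mat (mat_diag n f) = map f [0..<n]"
    by (simp add: diag_mat_def mat_diag_def)
  finally show ?thesis by (simp add: prod_lessThan_eq_prod_list comp_def)
qed

lemma char_poly_smult_add_one:
  fixes A :: "'a :: conjugatable_ordered_field mat"
  assumes A: "A \<in> carrier_mat n n" and cp: "char_poly A = (\<Prod>i<n. [:- q i, 1:])"
  shows "char_poly (a \<cdot>\<^sub>m A + c \<cdot>\<^sub>m 1\<^sub>m n) = (\<Prod>i<n. [:- (a * q i + c), 1:])"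
proof -
  obtain T P Q where "schur_decomposition A (map q [0..<n]) = (T, P, Q)"
    by (cases "schur_decomposition A (map q [0..<n])") auto
  from schur_decomposition[OF A _ this]
  have wit: "similar_mat_wit A T P Q" and ut: "upper_triangular T" and diag: "diag_mat T = map q [0..<n]"
    using cp by (auto simp: prod_lessThan_eq_prod_list comp_def)
  have T: "T \<in> carrier_mat n n" using similar_mat_witD2[OF A wit] by auto
  have shift: "char_matrix (a \<cdot>\<^sub>m B) (- c) = a \<cdot>\<^sub>m B + c \<cdot>\<^sub>m 1\<^sub>m n"
    if "B \<in> carrier_mat n n" for B :: "'a mat"
    using that by (simp add: char_matrix_def)
  let ?T = "a \<cdot>\<^sub>m T + c \<cdot>\<^sub>m 1\<^sub>m n"
  have "similar_mat (a \<cdot>\<^sub>m A + c \<cdot>\<^sub>m 1\<^sub>m n) ?T"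
    using similar_mat_wit_char_matrix[OF similar_mat_wit_smult[OF wit, of a], where ev = "- c"]
    unfolding shift[OF A] shift[OF T] similar_mat_def by blast
  then have "char_poly (a \<cdot>\<^sub>m A + c \<cdot>\<^sub>m 1\<^sub>m n) = char_poly ?T"
    by (rule char_poly_similar)
  also have "\<dots> = (\<Prod>e\<leftarrow>diag_mat ?T. [:- e, 1:])"
    by (rule char_poly_upper_triangular) (use T ut in \<open>auto simp: upper_triangular_def\<close>)
  also have "diag_mat ?T = map (\<lambda>i. a * q i + c) [0..<n]"
    using T diag by (auto simp: diag_mat_def intro: nth_equalityI)
  finally show ?thesis by (simp add: prod_lessThan_eq_prod_list comp_def)
qed

section \<open>Blow-up of a matrix\<close>

(* M \<otimes> J_t + diag d \<otimes> I_t, row i belonging to class i div t *)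
definition blowup_mat :: "nat \<Rightarrow> 'a :: semiring_1 mat \<Rightarrow> (nat \<Rightarrow> 'a) \<Rightarrow> 'a mat" where
  "blowup_mat t M d = mat (t * dim_row M) (t * dim_row M)
     (\<lambda>(i, j). M $$ (i div t, j div t) + (if i = j then d (i div t) else 0))"

lemma blowup_mat_carrier:
  "M \<in> carrier_mat n n \<Longrightarrow> blowup_mat t M d \<in> carrier_mat (t * n) (t * n)"
  by (simp add: blowup_mat_def)

lemma blowup_mat_index:
  "M \<in> carrier_mat n n \<Longrightarrow> i < t * n \<Longrightarrow> j < t * n \<Longrightarrow>
   blowup_mat t M d $$ (i, j) = M $$ (i div t, j div t) + (if i = j then d (i div t) else 0)"
  by (simp add: blowup_mat_def)

definition basis_class :: "nat \<Rightarrow> nat \<Rightarrow> nat" where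
  "basis_class n c = (c - n) mod n"

definition basis_offset :: "nat \<Rightarrow> nat \<Rightarrow> nat" where
  "basis_offset n c = (c - n) div n + 1"

lemma basis_class_offset_bounds:
  assumes "n \<le> c" "c < t * n"
  shows "basis_class n c < n" "0 < basis_offset n c" "basis_offset n c < t"
proof -
  have "c - n < (t - 1) * n" using assms by (simp add: diff_mult_distrib)
  then have "(c - n) div n < t - 1" by (simp add: less_mult_imp_div_less)
  then show "basis_offset n c < t" by (simp add: basis_offset_def)
  show "basis_class n c < n" using assms by (cases "n = 0") (simp_all add: basis_class_def)
  show "0 < basis_offset n c" by (simp add: basis_offset_def)
qed

lemma basis_class_offset_inj:
  assumes "n \<le> c" "n \<le> c'" "basis_class n c = basis_class n c'" "basis_offset n c = basis_offset n c'"
  shows "c = c'"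
  using assms div_mod_decomp[of "c - n" n] div_mod_decomp[of "c' - n" n]
  by (simp add: basis_class_def basis_offset_def)

(* Columns c < n are the class indicators; column c = n + (a - 1) n + u, with 0 < a < t, is
   e_(u t) - e_(u t + a), where u = basis_class n c and a = basis_offset n c. *)
definition blowup_basis :: "nat \<Rightarrow> nat \<Rightarrow> 'a :: ring_1 mat" where
  "blowup_basis t n = mat (t * n) (t * n) (\<lambda>(i, c).
     if c < n then (if i div t = c then 1 else 0)
     else (if i = basis_class n c * t then 1 else 0)
        - (if i = basis_class n c * t + basis_offset n c then 1 else 0))"

definition blowup_basis_inv :: "nat \<Rightarrow> nat \<Rightarrow> 'a :: field mat" where
  "blowup_basis_inv t n = mat (t * n) (t * n) (\<lambda>(c, i).
     if c < n then (if i div t = c then 1 else 0) / of_nat t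
     else (if i div t = basis_class n c then 1 else 0) / of_nat t
        - (if i = basis_class n c * t + basis_offset n c then 1 else 0))"

lemma blowup_basis_carrier: "blowup_basis t n \<in> carrier_mat (t * n) (t * n)"
  by (simp add: blowup_basis_def)

lemma blowup_basis_inv_carrier: "blowup_basis_inv t n \<in> carrier_mat (t * n) (t * n)"
  by (simp add: blowup_basis_inv_def)

lemma mult_blowup_basis_low:
  fixes A :: "'a :: ring_1 mat"
  assumes A: "A \<in> carrier_mat m (t * n)" and r: "r < m" and c: "c < n" and t: "0 < t"
  shows "(A * blowup_basis t n) $$ (r, c) = (\<Sum>a<t. A $$ (r, c * t + a))"
proof -
  have "c < t * n" using c t by (metis less_le_trans mult_le_mono1 One_nat_def Suc_leI mult_1)
  then have "(A * blowup_basis t n) $$ (r, c) =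
      (\<Sum>i<t * n. A $$ (r, i) * (if i div t = c then 1 else 0))"
    unfolding mult_index_sum[OF A blowup_basis_carrier r \<open>c < t * n\<close>]
    by (intro sum.cong) (use c in \<open>simp_all add: blowup_basis_def\<close>)
  also have "\<dots> = (\<Sum>v<n. \<Sum>a<t. A $$ (r, v * t + a) * (if (v * t + a) div t = c then 1 else 0))"
    by (subst mult.commute) (rule sum.lessThan_mult_group)
  also have "\<dots> = (\<Sum>v<n. if v = c then (\<Sum>a<t. A $$ (r, v * t + a)) else 0)"
    by (intro sum.cong) auto
  also have "\<dots> = (\<Sum>a<t. A $$ (r, c * t + a))"
    using c by simp
  finally show ?thesis .
qed

lemma mult_blowup_basis_high:
  fixes A :: "'a :: ring_1 mat"
  assumes A: "A \<in> carrier_mat m (t * n)" and r: "r < m" and c: "n \<le> c" "c < t * n"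
  shows "(A * blowup_basis t n) $$ (r, c) =
    A $$ (r, basis_class n c * t) - A $$ (r, basis_class n c * t + basis_offset n c)"
proof -
  note bounds = basis_class_offset_bounds[OF c]
  have "(A * blowup_basis t n) $$ (r, c) = (\<Sum>i<t * n. A $$ (r, i) *
      ((if i = basis_class n c * t then 1 else 0)
       - (if i = basis_class n c * t + basis_offset n c then 1 else 0)))"
    unfolding mult_index_sum[OF A blowup_basis_carrier r c(2)]
    by (intro sum.cong) (use c in \<open>simp_all add: blowup_basis_def\<close>)
  also have "\<dots> = A $$ (r, basis_class n c * t) - A $$ (r, basis_class n c * t + basis_offset n c)"
    using block_index_less[OF _ bounds(1), of 0] block_index_less[OF bounds(3,1)] bounds
    by (simp add: right_diff_distrib sum_subtractf if_distrib[of "times _"] cong: if_cong)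
  finally show ?thesis .
qed

lemma blowup_basis_index:
  "i < t * n \<Longrightarrow> c < t * n \<Longrightarrow> blowup_basis t n $$ (i, c) =
     (if c < n then (if i div t = c then 1 else 0)
      else (if i = basis_class n c * t then 1 else 0)
        - (if i = basis_class n c * t + basis_offset n c then 1 else 0))"
  by (simp add: blowup_basis_def)

lemma blowup_basis_inv_index:
  "c < t * n \<Longrightarrow> i < t * n \<Longrightarrow> blowup_basis_inv t n $$ (c, i) =
     (if c < n then (if i div t = c then 1 else 0) / of_nat t
      else (if i div t = basis_class n c then 1 else 0) / of_nat t
        - (if i = basis_class n c * t + basis_offset n c then 1 else 0))"
  by (simp add: blowup_basis_inv_def)

lemma blowup_basis_inv_mult_low:
  fixes t :: nat
  assumes t: "0 < t" and c: "c < t * n" and d: "d < n"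
  shows "(blowup_basis_inv t n * blowup_basis t n) $$ (c, d) = (if c = d then 1 else (0 :: 'a :: field_char_0))"
proof -
  have "(blowup_basis_inv t n * blowup_basis t n) $$ (c, d) =
      (\<Sum>a<t. (blowup_basis_inv t n $$ (c, d * t + a) :: 'a))"
    by (rule mult_blowup_basis_low[OF blowup_basis_inv_carrier c d t])
  also have "\<dots> = (if c = d then 1 else 0)"
  proof (cases "c < n")
    case True
    have "(\<Sum>a<t. blowup_basis_inv t n $$ (c, d * t + a))
        = (\<Sum>a<t. (if d = c then 1 else 0) / (of_nat t :: 'a))"
      by (intro sum.cong refl)
        (use True c d block_index_less in \<open>simp add: blowup_basis_inv_index\<close>)
    then show ?thesis using t by auto
  next
    case False
    note bounds = basis_class_offset_bounds[OF leI[OF False] c]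
    have "(\<Sum>a<t. blowup_basis_inv t n $$ (c, d * t + a))
        = (\<Sum>a<t. (if d = basis_class n c then 1 else 0) / (of_nat t :: 'a)
         - (if d = basis_class n c \<and> a = basis_offset n c then 1 else 0))"
      by (intro sum.cong refl) (use False c d bounds block_index_less mult_add_eq_mult_add_iff
          in \<open>simp add: blowup_basis_inv_index\<close>)
    then show ?thesis using t False d bounds by (auto simp: sum_subtractf)
  qed
  finally show ?thesis .
qed

lemma blowup_basis_inv_mult_high:
  fixes t :: nat
  assumes c: "c < t * n" and d: "n \<le> d" "d < t * n"
  shows "(blowup_basis_inv t n * blowup_basis t n) $$ (c, d) = (if c = d then 1 else (0 :: 'a :: field_char_0))"
proof -
  note bd = basis_class_offset_bounds[OF d]
  have idx: "basis_class n d * t < t * n" "basis_class n d * t + basis_offset n d < t * n"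
    using block_index_less[OF _ bd(1)] bd by auto
  have "(blowup_basis_inv t n * blowup_basis t n) $$ (c, d) =
      (blowup_basis_inv t n $$ (c, basis_class n d * t) :: 'a)
      - blowup_basis_inv t n $$ (c, basis_class n d * t + basis_offset n d)"
    by (rule mult_blowup_basis_high[OF blowup_basis_inv_carrier c d])
  also have "\<dots> = (if c = d then 1 else 0)"
  proof (cases "c < n")
    case True
    then show ?thesis using c idx bd d by (simp add: blowup_basis_inv_index)
  next
    case False
    note bc = basis_class_offset_bounds[OF leI[OF False] c]
    have "basis_class n d * t + 0 \<noteq> basis_class n c * t + basis_offset n c"
      using mult_add_eq_mult_add_iff[of 0 t "basis_offset n c"] bc by auto
    moreover have "basis_class n d * t + basis_offset n d = basis_class n c * t + basis_offset n c
        \<longleftrightarrow> c = d"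
      using mult_add_eq_mult_add_iff[OF bd(3) bc(3)] basis_class_offset_inj[of n d c] False d by auto
    ultimately show ?thesis using c idx bd bc False by (simp add: blowup_basis_inv_index)
  qed
  finally show ?thesis .
qed

lemma blowup_basis_inv_mult:
  assumes "0 < t"
  shows "blowup_basis_inv t n * blowup_basis t n = (1\<^sub>m (t * n) :: 'a :: field_char_0 mat)"
proof (rule eq_matI)
  fix c d assume "c < dim_row (1\<^sub>m (t * n) :: 'a mat)" "d < dim_col (1\<^sub>m (t * n) :: 'a mat)"
  then have c: "c < t * n" and d: "d < t * n" by auto
  show "(blowup_basis_inv t n * blowup_basis t n) $$ (c, d) = (1\<^sub>m (t * n) :: 'a mat) $$ (c, d)"
  proof (cases "d < n")
    case True
    then show ?thesis using blowup_basis_inv_mult_low[OF assms c True] c d by simp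
  next
    case False
    then show ?thesis using blowup_basis_inv_mult_high[OF c leI[OF False] d] c d by simp
  qed
qed (auto simp: blowup_basis_inv_def blowup_basis_def)

(* the matrix of blowup_mat t M d with respect to blowup_basis t n *)
definition blowup_block_diag :: "nat \<Rightarrow> 'a :: semiring_1 mat \<Rightarrow> (nat \<Rightarrow> 'a) \<Rightarrow> 'a mat" where
  "blowup_block_diag t M d = (let n = dim_row M in
     four_block_mat (of_nat t \<cdot>\<^sub>m M + mat_diag n d) (0\<^sub>m n ((t - 1) * n))
       (0\<^sub>m ((t - 1) * n) n) (mat_diag ((t - 1) * n) (\<lambda>k. d (k mod n))))"

lemma blowup_block_diag_index:
  assumes M: "M \<in> carrier_mat n n" and t: "0 < t" and k: "k < t * n" and c: "c < t * n"
  shows "blowup_block_diag t M d $$ (k, c) =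
    (if c < n then (if k < n then of_nat t * M $$ (k, c) + (if k = c then d k else 0) else 0)
     else if k = c then d (basis_class n c) else 0)"
proof -
  have tn: "n + (t - 1) * n = t * n" using t by (cases t) auto
  then show ?thesis
    using M k c by (auto simp: blowup_block_diag_def mat_diag_def basis_class_def)
qed

lemma blowup_block_diag_carrier:
  "M \<in> carrier_mat n n \<Longrightarrow> 0 < t \<Longrightarrow>
   blowup_block_diag t M d \<in> carrier_mat (t * n) (t * n)"
  by (cases t) (auto simp: blowup_block_diag_def Let_def)

lemma blowup_mat_mult_basis:
  fixes M :: "'a :: comm_ring_1 mat"
  assumes M: "M \<in> carrier_mat n n" and t: "0 < t"
  shows "blowup_mat t M d * blowup_basis t n = blowup_basis t n * blowup_block_diag t M d"
proof (rule eq_matI)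
  let ?K = "blowup_mat t M d" and ?P = "blowup_basis t n :: 'a mat" and ?R = "blowup_block_diag t M d"
  have K: "?K \<in> carrier_mat (t * n) (t * n)" by (rule blowup_mat_carrier[OF M])
  fix i c assume "i < dim_row (?P * ?R)" "c < dim_col (?P * ?R)"
  then have i: "i < t * n" and c: "c < t * n"
    using carrier_matD[OF blowup_block_diag_carrier[OF M t]] by (auto simp: blowup_basis_def)
  define u where "u = i div t"
  have u: "u < n" using i by (simp add: u_def less_mult_imp_div_less mult.commute)
  have i_eq: "i = u * t + i mod t" by (simp add: u_def)
  have ut: "u < t * n" using u t by (metis less_le_trans mult_le_mono1 One_nat_def Suc_leI mult_1)
  have RHS: "(?P * ?R) $$ (i, c) = (\<Sum>k<t * n. ?P $$ (i, k) * ?R $$ (k, c))"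
    by (rule mult_index_sum[OF blowup_basis_carrier blowup_block_diag_carrier[OF M t] i c])
  show "(?K * ?P) $$ (i, c) = (?P * ?R) $$ (i, c)"
  proof (cases "c < n")
    case True
    have "(?K * ?P) $$ (i, c) = (\<Sum>a<t. ?K $$ (i, c * t + a))"
      by (rule mult_blowup_basis_low[OF K i True t])
    also have "\<dots> = (\<Sum>a<t. M $$ (u, c) + (if c = u \<and> a = i mod t then d u else 0))"
      using i_eq mult_add_eq_mult_add_iff[of _ t "i mod t" c u] t
      by (intro sum.cong refl) (auto simp: blowup_mat_index[OF M i] block_index_less[OF _ True] u_def)
    also have "\<dots> = of_nat t * M $$ (u, c) + (if c = u then d u else 0)"
      using t by (simp add: sum.distrib)
    also have "\<dots> = (\<Sum>k<t * n.
        if k = u then of_nat t * M $$ (k, c) + (if k = c then d k else 0) else 0)"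
      using ut by auto
    also have "\<dots> = (?P * ?R) $$ (i, c)"
      unfolding RHS using True i c t u
      by (intro sum.cong refl) (auto simp: blowup_basis_index blowup_block_diag_index[OF M t] u_def)
    finally show ?thesis .
  next
    case False
    note b = basis_class_offset_bounds[OF leI[OF False] c]
    let ?j = "basis_class n c * t" and ?j' = "basis_class n c * t + basis_offset n c"
    have j: "?j < t * n" "?j' < t * n" "?j div t = basis_class n c" "?j' div t = basis_class n c"
      using block_index_less[OF _ b(1)] b by auto
    have "(?K * ?P) $$ (i, c) = ?K $$ (i, ?j) - ?K $$ (i, ?j')"
      by (rule mult_blowup_basis_high[OF K i leI[OF False] c])
    also have "\<dots> = ?P $$ (i, c) * d (basis_class n c)"
      using i c False j by (auto simp: blowup_mat_index[OF M] blowup_basis_index)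
    also have "\<dots> = (\<Sum>k<t * n. if k = c then ?P $$ (i, c) * d (basis_class n c) else 0)"
      using c by auto
    also have "\<dots> = (?P * ?R) $$ (i, c)"
      unfolding RHS using False c
      by (intro sum.cong refl) (auto simp: blowup_block_diag_index[OF M t])
    finally show ?thesis .
  qed
qed (use carrier_matD[OF blowup_block_diag_carrier[OF M t]] in
      \<open>auto simp: blowup_basis_def blowup_mat_def carrier_matD[OF M]\<close>)

lemma char_poly_blowup_mat:
  fixes M :: "'a :: field_char_0 mat"
  assumes M: "M \<in> carrier_mat n n" and t: "0 < t"
  shows "char_poly (blowup_mat t M d) =
    char_poly (of_nat t \<cdot>\<^sub>m M + mat_diag n d) * (\<Prod>u<n. [:- d u, 1:]) ^ (t - 1)"
proof -
  let ?K = "blowup_mat t M d" and ?P = "blowup_basis t n :: 'a mat"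
    and ?Q = "blowup_basis_inv t n :: 'a mat" and ?R = "blowup_block_diag t M d"
  have QP: "?Q * ?P = 1\<^sub>m (t * n)" by (rule blowup_basis_inv_mult[OF t])
  have PQ: "?P * ?Q = 1\<^sub>m (t * n)"
    by (rule mat_mult_left_right_inverse[OF blowup_basis_inv_carrier blowup_basis_carrier QP])
  have "?K = ?K * (?P * ?Q)" using blowup_mat_carrier[OF M, of t d] by (simp add: PQ)
  also have "\<dots> = ?P * ?R * ?Q"
    by (simp add: assoc_mult_mat[OF blowup_mat_carrier[OF M] blowup_basis_carrier
          blowup_basis_inv_carrier, symmetric] blowup_mat_mult_basis[OF M t])
  finally have KR: "?K = ?P * ?R * ?Q" .
  have "similar_mat ?K ?R"
    by (rule similar_matI[OF _ PQ QP KR])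
      (auto simp: blowup_mat_carrier[OF M] blowup_block_diag_carrier[OF M t]
        blowup_basis_carrier blowup_basis_inv_carrier)
  then have "char_poly ?K = char_poly ?R" by (rule char_poly_similar)
  also have "\<dots> = char_poly (of_nat t \<cdot>\<^sub>m M + mat_diag n d)
      * char_poly (mat_diag ((t - 1) * n) (\<lambda>k. d (k mod n)))"
    unfolding blowup_block_diag_def Let_def carrier_matD(1)[OF M]
    by (rule char_poly_four_block_lower_left_zero) (use M in auto)
  finally show ?thesis
    unfolding char_poly_mat_diag prod_lessThan_mult_mod[of "\<lambda>u. [:- d u, 1:]"] .
qed

section \<open>Degrees and signless Laplacians\<close>

lemma of_nat_degree_eq_sum:
  "of_nat (degree m G i) = (\<Sum>j<m. if G i j then 1 else (0 :: 'a :: comm_semiring_1))"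
proof -
  have "{j. j < m \<and> G i j} = {j \<in> {..<m}. G i j}" by auto
  then show ?thesis by (simp add: degree_def sum.inter_filter[symmetric])
qed

lemma degree_blowup:
  assumes "i < t * n"
  shows "degree (t * n) (blowup t E) i = t * degree n E (i div t)"
proof -
  have "degree (t * n) (blowup t E) i
      = (\<Sum>v<n. \<Sum>a<t. if E (i div t) ((v * t + a) div t) then 1 else 0)"
    using of_nat_degree_eq_sum[of "t * n" "blowup t E" i, where 'a = nat]
    by (simp add: blowup_def mult.commute[of t n] sum.lessThan_mult_group)
  also have "\<dots> = (\<Sum>v<n. t * (if E (i div t) v then 1 else 0))"
    by (intro sum.cong refl) simp
  also have "\<dots> = t * degree n E (i div t)"
    using of_nat_degree_eq_sum[of n E "i div t", where 'a = nat] by (simp add: sum_distrib_left)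
  finally show ?thesis .
qed

lemma degree_complement:
  assumes "\<not> G i i" and "i < m"
  shows "real (degree m (complement G) i) = real m - real (degree m G i) - 1"
proof -
  have "real (degree m (complement G) i) = (\<Sum>j<m. 1 - (if G i j then 1 else 0) - (if j = i then 1 else 0))"
    unfolding of_nat_degree_eq_sum complement_def by (intro sum.cong refl) (use assms in auto)
  also have "\<dots> = real m - real (degree m G i) - 1"
    using assms by (simp add: sum_subtractf of_nat_degree_eq_sum)
  finally show ?thesis .
qed

lemma signless_laplacian_index:
  "i < m \<Longrightarrow> j < m \<Longrightarrow> signless_laplacian m G $$ (i, j) =
     (if i = j then real (degree m G i) else 0) + (if G i j then 1 else 0)"
  by (simp add: signless_laplacian_def deg_mat_def adj_mat_def)

lemma signless_laplacian_carrier: "signless_laplacian m G \<in> carrier_mat m m"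
  by (simp add: signless_laplacian_def deg_mat_def adj_mat_def)

lemma signless_laplacian_complement_blowup:
  assumes irrefl: "\<forall>u<n. \<not> E u u"
  shows "signless_laplacian (t * n) (complement (blowup t E)) =
    blowup_mat t (adj_mat n (complement E) + 1\<^sub>m n)
      (\<lambda>u. real t * real n - real t * real (degree n E u) - 2)" (is "?Q = ?B")
proof (rule eq_matI)
  fix i j assume "i < dim_row ?B" "j < dim_col ?B"
  then have i: "i < t * n" and j: "j < t * n" by (auto simp: blowup_mat_def adj_mat_def)
  have u: "i div t < n" "j div t < n"
    using i j by (simp_all add: less_mult_imp_div_less mult.commute)
  have "real (degree (t * n) (complement (blowup t E)) i)
      = real t * real n - real t * real (degree n E (i div t)) - 1"
    using degree_complement[of "blowup t E" i "t * n"] degree_blowup[OF i] irrefl u i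
    by (simp add: blowup_def)
  then show "?Q $$ (i, j) = ?B $$ (i, j)"
    using i j u irrefl
    by (auto simp: signless_laplacian_index blowup_mat_index[of _ n] adj_mat_def complement_def
        blowup_def)
qed (auto simp: signless_laplacian_def deg_mat_def adj_mat_def blowup_mat_def)

lemma smult_complement_adj_one_plus_diag:
  assumes irrefl: "\<forall>u<n. \<not> E u u"
  shows "real t \<cdot>\<^sub>m (adj_mat n (complement E) + 1\<^sub>m n)
      + mat_diag n (\<lambda>u. real t * real n - real t * real (degree n E u) - 2)
    = real t \<cdot>\<^sub>m signless_laplacian n (complement E) + (2 * (real t - 1)) \<cdot>\<^sub>m 1\<^sub>m n"
    (is "?A = ?B")
proof (rule eq_matI)
  fix u v assume "u < dim_row ?B" "v < dim_col ?B"
  then have u: "u < n" and v: "v < n" by (auto simp: signless_laplacian_def deg_mat_def)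
  note index = signless_laplacian_index carrier_matD[OF signless_laplacian_carrier]
    adj_mat_def mat_diag_def complement_def
  show "?A $$ (u, v) = ?B $$ (u, v)"
  proof (cases "u = v")
    case True
    have "real (degree n (complement E) u) = real n - real (degree n E u) - 1"
      using degree_complement[of E u n] irrefl u by simp
    then have "real t * real (degree n (complement E) u)
        = real t * (real n - real (degree n E u) - 1)"
      by (simp only:)
    then show ?thesis using True u irrefl by (simp add: index right_diff_distrib)
  qed (use u v in \<open>auto simp: index\<close>)
qed (auto simp: signless_laplacian_def deg_mat_def adj_mat_def mat_diag_def)

theorem theorem3:
  fixes n t :: nat and E :: "nat \<Rightarrow> nat \<Rightarrow> bool" and qbar :: "nat \<Rightarrow> real"
  assumes "simple_graph n E"
    and "t \<ge> 1"
    and "\<forall>i j. i \<le> j \<and> j < n \<longrightarrow> qbar j \<le> qbar i"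
    and "char_poly (signless_laplacian n (complement E)) = (\<Prod>i<n. [:- qbar i, 1:])"
  shows "char_poly (signless_laplacian (t * n) (complement (blowup t E))) =
           (\<Prod>i<n. [:- (real t * qbar i + 2 * (real t - 1)), 1:]) *
           (\<Prod>i<n. [:- (real t * real n - real t * real (degree n E i) - 2), 1:]) ^ (t - 1)"
proof -
  have irrefl: "\<forall>u<n. \<not> E u u" using assms(1) by (simp add: simple_graph_def)
  define f where "f = (\<lambda>u. real t * real n - real t * real (degree n E u) - 2)"
  have "char_poly (signless_laplacian (t * n) (complement (blowup t E))) =
      char_poly (blowup_mat t (adj_mat n (complement E) + 1\<^sub>m n) f)"
    by (simp add: signless_laplacian_complement_blowup[where n = n and E = E, OF irrefl] f_def)
  also have "\<dots> = char_poly (real t \<cdot>\<^sub>m (adj_mat n (complement E) + 1\<^sub>m n) + mat_diag n f)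
      * (\<Prod>u<n. [:- f u, 1:]) ^ (t - 1)"
    by (rule char_poly_blowup_mat) (use assms(2) in \<open>auto simp: adj_mat_def\<close>)
  also have "real t \<cdot>\<^sub>m (adj_mat n (complement E) + 1\<^sub>m n) + mat_diag n f =
      real t \<cdot>\<^sub>m signless_laplacian n (complement E) + (2 * (real t - 1)) \<cdot>\<^sub>m 1\<^sub>m n"
    unfolding f_def by (rule smult_complement_adj_one_plus_diag[where n = n and E = E, OF irrefl])
  also have "char_poly \<dots> = (\<Prod>i<n. [:- (real t * qbar i + 2 * (real t - 1)), 1:])"
    by (rule char_poly_smult_add_one[OF signless_laplacian_carrier assms(4)])
  finally show ?thesis by (simp add: f_def)
qed

end
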